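(* Let $\lambda$ and $g$ be as in the context. There exist universal constants $E,E'>1$ such that for every integer $j\ge0$, \[ E\lambda^{j}\le\left|\frac{\mathrm{d}\left(\left[(-\lambda)g\right]^{j}\circ g\right)}{\mathrm{d}x}(x)\right|\le E'\lambda^{j} \] for all $x$ with $\lambda^{-(j+1)}\le|x|\le\lambda^{-j}$, where $\left[(-\lambda)g\right]^{j}$ is the $j$-fold composition of $x\mapsto(-\lambda)g(x)$.
   Context: There is a unique constant $\lambda=2.5029\ldots$ and a unique infinitely (period-doubling) renormalizable analytic unimodal map $g:[-1,1]\to[-1,1]$ solving $g(x)=-\lambda\, g^{2}(-x/\lambda)$ for $-1\le x\le1$ ($g^2=g\circ g$). Unimodal means: $-1$ is the unique fixed point with positive multiplier, $g(1)=-1$, and $g$ has a unique maximum at an interior nondegenerate critical point $c^{(0)}$. Moreover $g$ is analytic near $[-1,1]$, even, concave on $[-c^{(1)},c^{(1)}]$ where $c^{(1)}=g(c^{(0)})$, satisfies $g(c^{(1)})=-c^{(1)}/\lambda$, $g'(c^{(1)})=-\lambda$, and has negative Schwarzian derivative. *)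

theory Defs
  imports "HOL-Analysis.Analysis" "HOL-Complex_Analysis.Complex_Analysis"
begin

definition analytic_near_interval :: "(real \<Rightarrow> real) \<Rightarrow> bool" where
  "analytic_near_interval g \<longleftrightarrow>
     (\<exists>G S. open S \<and> complex_of_real ` {-1..1} \<subseteq> S \<and> G holomorphic_on S \<and>
        (\<forall>x. complex_of_real x \<in> S \<longrightarrow> G (complex_of_real x) = complex_of_real (g x)))"

definition schwarzian :: "(real \<Rightarrow> real) \<Rightarrow> real \<Rightarrow> real" where
  "schwarzian g x =
     (deriv ^^ 3) g x / deriv g x - 3/2 * ((deriv ^^ 2) g x / deriv g x)^2"

definition unimodal :: "(real \<Rightarrow> real) \<Rightarrow> real \<Rightarrow> bool" where
  "unimodal g c0 \<longleftrightarrow>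
     g ` {-1..1} \<subseteq> {-1..1} \<and>
     g (-1) = -1 \<and> deriv g (-1) > 0 \<and>
     (\<forall>x\<in>{-1..1}. g x = x \<and> deriv g x > 0 \<longrightarrow> x = -1) \<and>
     g 1 = -1 \<and>
     c0 \<in> {-1<..<1} \<and> (\<forall>x\<in>{-1..1}. x \<noteq> c0 \<longrightarrow> g x < g c0) \<and>
     deriv g c0 = 0 \<and> (deriv ^^ 2) g c0 \<noteq> 0"

definition feigenbaum_fixed_point :: "real \<Rightarrow> (real \<Rightarrow> real) \<Rightarrow> bool" where
  "feigenbaum_fixed_point lam g \<longleftrightarrow>
     2.5029 \<le> lam \<and> lam < 2.5030 \<and>
     (\<forall>x\<in>{-1..1}. g x = - lam * g (g (- x / lam))) \<and>
     analytic_near_interval g \<and>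
     (\<exists>c0. unimodal g c0 \<and>
        (let c1 = g c0 in
           concave_on {-c1..c1} g \<and> g c1 = - c1 / lam \<and> deriv g c1 = - lam)) \<and>
     (\<forall>x\<in>{-1..1}. g (- x) = g x) \<and>
     (\<forall>x\<in>{-1..1}. deriv g x \<noteq> 0 \<longrightarrow> schwarzian g x < 0)"

end

theory Submission imports Defs begin

text \<open>Evenness and the functional equation give \<open>((\<lambda>y. - lam * g y) ^^ j) (g x) = g (lam ^ j * x)\<close>
  for \<open>\<bar>lam ^ j * x\<bar> \<le> 1\<close>, so the derivative in question is \<open>lam ^ j * deriv g (lam ^ j * x)\<close>
  and it suffices to bound \<open>\<bar>deriv g\<bar>\<close> on \<open>1 / lam \<le> \<bar>y\<bar> \<le> 1\<close>. With \<open>c1 = g 0\<close> and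
  \<open>u0 = c1 / lam\<close>, concavity gives \<open>- lam \<le> deriv g \<le> deriv g u0\<close> on \<open>[u0, c1]\<close>, and
  \<open>deriv g u0 < -1\<close> because otherwise \<open>deriv g\<close> would be constant on an interval, where the
  Schwarzian derivative vanishes. For \<open>y \<in> [c1, 1]\<close> the differentiated functional equation
  \<open>deriv g (lam * u) = - deriv g (g u) * deriv g u\<close> writes \<open>deriv g y\<close> as a product of two
  such values, since both \<open>u = y / lam\<close> and \<open>g u\<close> lie in \<open>[u0, c1]\<close>; this last fact is a
  comparison of points of the orbit of \<open>1 / lam\<close> along the decreasing branch of \<open>g\<close>.\<close>

lemma analytic_near_interval_has_real_derivative:
  assumes "analytic_near_interval g" "x \<in> {-1..1}"
  shows "(g has_real_derivative deriv g x) (at x)"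
proof -
  obtain G S where S: "open S" "complex_of_real ` {-1..1} \<subseteq> S" "G holomorphic_on S"
    "\<And>x. complex_of_real x \<in> S \<Longrightarrow> G (complex_of_real x) = complex_of_real (g x)"
    using assms(1) unfolding analytic_near_interval_def by blast
  have xS: "complex_of_real x \<in> S" using S(2) assms(2) by auto
  then obtain G' where G': "(G has_field_derivative G') (at (complex_of_real x))"
    using holomorphic_on_imp_differentiable_at[OF S(3) S(1)] field_differentiable_def by blast
  have "((\<lambda>t. G (of_real t)) has_vector_derivative G') (at x)"
    using has_vector_derivative_real_field[OF G'] by blast
  then have "((\<lambda>t. Re (G (of_real t))) has_vector_derivative Re G') (at x)"
    by (rule bounded_linear.has_vector_derivative[OF bounded_linear_Re])
  then have Re_deriv: "((\<lambda>t. Re (G (of_real t))) has_real_derivative Re G') (at x)"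
    by (simp add: has_real_derivative_iff_has_vector_derivative)
  have "open (complex_of_real -` S)"
    by (rule open_vimage[OF S(1)]) (auto intro: continuous_intros)
  then have "(g has_real_derivative Re G') (at x)"
    by (rule has_field_derivative_transform_within_open[OF Re_deriv]) (use xS S(4) in auto)
  then show ?thesis using DERIV_imp_deriv by metis
qed

lemma has_real_derivative_unique_on_Icc:
  fixes f h :: "real \<Rightarrow> real"
  assumes "(f has_real_derivative D1) (at x)" "(h has_real_derivative D2) (at x)"
    and "a < b" "x \<in> {a..b}" "\<And>y. y \<in> {a..b} \<Longrightarrow> f y = h y"
  shows "D1 = D2"
proof -
  have f: "(f has_real_derivative D1) (at x within {a..b})"
    using assms(1) by (rule has_field_derivative_at_within)
  have "(h has_real_derivative D2) (at x within {a..b})"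
    using assms(2) by (rule has_field_derivative_at_within)
  then have "(f has_real_derivative D2) (at x within {a..b})"
    by (rule has_field_derivative_transform_within[where d=1]) (use assms in auto)
  moreover have "at x within {a..b} \<noteq> bot"
    using assms(3,4) by (simp add: trivial_limit_within)
  ultimately show ?thesis using has_field_derivative_unique[OF f] by blast
qed

lemma concave_on_secant_between_derivatives:
  fixes f :: "real \<Rightarrow> real"
  assumes cv: "concave_on {a..b} f" and xy: "a \<le> x" "x < y" "y \<le> b"
    and dx: "(f has_real_derivative Dx) (at x)" and dy: "(f has_real_derivative Dy) (at y)"
  shows "(f y - f x) / (y - x) \<le> Dx" "Dy \<le> (f y - f x) / (y - x)"
proof -
  have cvx: "convex_on {a..b} (\<lambda>t. - f t)" using cv by (simp add: concave_on_def)
  have slopes: "(f y - f x) / (y - x) \<le> (f t - f x) / (t - x) \<and>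
      (f y - f t) / (y - t) \<le> (f y - f x) / (y - x)" if "x < t" "t < y" for t
    using convex_on_slope_le[OF cvx, of x y t] that xy
    by (simp add: field_simps)
  have "((\<lambda>t. (f t - f x) / (t - x)) \<longlongrightarrow> Dx) (at x within {x<..})"
    using has_field_derivative_at_within[OF dx] has_field_derivative_iff by blast
  moreover have "\<forall>\<^sub>F t in at x within {x<..}. (f y - f x) / (y - x) \<le> (f t - f x) / (t - x)"
    using eventually_at_right_real[OF xy(2)] slopes by (auto elim: eventually_mono)
  ultimately show "(f y - f x) / (y - x) \<le> Dx"
    by (intro tendsto_lowerbound) auto
  have "((\<lambda>t. (f t - f y) / (t - y)) \<longlongrightarrow> Dy) (at y within {..<y})"
    using has_field_derivative_at_within[OF dy] has_field_derivative_iff by blast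
  moreover have "\<forall>\<^sub>F t in at y within {..<y}. (f t - f y) / (t - y) \<le> (f y - f x) / (y - x)"
    using eventually_at_left_real[OF xy(2)]
  proof (rule eventually_mono)
    fix t assume t: "t \<in> {x<..<y}"
    have "(f t - f y) / (t - y) = (f y - f t) / (y - t)" using t by (simp add: field_simps)
    then show "(f t - f y) / (t - y) \<le> (f y - f x) / (y - x)" using slopes[of t] t by auto
  qed
  ultimately show "Dy \<le> (f y - f x) / (y - x)"
    by (intro tendsto_upperbound) auto
qed

lemma deriv_eq_0_if_locally_const:
  fixes f :: "real \<Rightarrow> real"
  assumes "open U" "x \<in> U" "\<And>y. y \<in> U \<Longrightarrow> f y = c"
  shows "deriv f x = 0"
proof -
  have "((\<lambda>_. c) has_real_derivative 0) (at x)" by simp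
  then have "(f has_real_derivative 0) (at x)"
    by (rule has_field_derivative_transform_within_open[OF _ assms(1,2)]) (use assms(3) in auto)
  then show ?thesis by (rule DERIV_imp_deriv)
qed

lemma schwarzian_eq_0_if_deriv_locally_const:
  assumes "open U" "x \<in> U" "\<And>y. y \<in> U \<Longrightarrow> deriv g y = c"
  shows "schwarzian g x = 0"
proof -
  have deriv2: "deriv (deriv g) y = 0" if "y \<in> U" for y
    using deriv_eq_0_if_locally_const[OF assms(1) that assms(3)] .
  have "(deriv ^^ 2) g x = 0" "(deriv ^^ 3) g x = 0"
    using deriv2[OF assms(2)] deriv_eq_0_if_locally_const[OF assms(1,2) deriv2]
    by (simp_all add: numeral_2_eq_2 numeral_3_eq_3)
  then show ?thesis by (simp add: schwarzian_def)
qed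

locale feigenbaum_map =
  fixes lam :: real and g :: "real \<Rightarrow> real"
  assumes fixed_point: "feigenbaum_fixed_point lam g"
begin

lemma lam_ge: "2.5029 \<le> lam"
  using fixed_point by (simp add: feigenbaum_fixed_point_def)

lemma lam_gt_1: "lam > 1"
  using lam_ge by simp

lemma even: "x \<in> {-1..1} \<Longrightarrow> g (- x) = g x"
  using fixed_point unfolding feigenbaum_fixed_point_def by blast

lemma has_deriv: "x \<in> {-1..1} \<Longrightarrow> (g has_real_derivative deriv g x) (at x)"
  using fixed_point analytic_near_interval_has_real_derivative
  by (simp add: feigenbaum_fixed_point_def)

lemma schwarzian_neg: "x \<in> {-1..1} \<Longrightarrow> deriv g x \<noteq> 0 \<Longrightarrow> schwarzian g x < 0"
  using fixed_point by (simp add: feigenbaum_fixed_point_def)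

lemma g_scaled:
  assumes "\<bar>lam * u\<bar> \<le> 1"
  shows "g (lam * u) = - lam * g (g u)"
proof -
  have "- (lam * u) \<in> {-1..1}" using assms by auto
  then have "g (lam * u) = g (- (lam * u))" using even by fastforce
  also have "\<dots> = - lam * g (g u)"
    using fixed_point lam_gt_1 \<open>- (lam * u) \<in> {-1..1}\<close> by (simp add: feigenbaum_fixed_point_def)
  finally show ?thesis .
qed

definition c1 :: real where "c1 = g 0"

lemma unimodal_at_0:
  "unimodal g 0 \<and> concave_on {-c1..c1} g \<and> g c1 = - c1 / lam \<and> deriv g c1 = - lam"
proof -
  obtain c0 where uni: "unimodal g c0" and crit: "concave_on {- g c0..g c0} g"
      "g (g c0) = - g c0 / lam" "deriv g (g c0) = - lam"
    using fixed_point unfolding feigenbaum_fixed_point_def Let_def by blast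
  have "c0 = 0"
  proof (rule ccontr)
    assume "c0 \<noteq> 0"
    moreover have "c0 \<in> {-1..1}" using uni by (auto simp: unimodal_def)
    ultimately have "g (- c0) < g c0" using uni by (auto simp: unimodal_def)
    then show False using even \<open>c0 \<in> {-1..1}\<close> by simp
  qed
  then show ?thesis using uni crit unfolding c1_def by simp
qed

lemma maps_into: "x \<in> {-1..1} \<Longrightarrow> g x \<in> {-1..1}"
  using unimodal_at_0 unfolding unimodal_def by blast

lemma
  shows g_1: "g 1 = -1"
    and deriv_minus_1_pos: "deriv g (-1) > 0"
    and deriv_0: "deriv g 0 = 0"
    and g_less_c1: "x \<in> {-1..1} \<Longrightarrow> x \<noteq> 0 \<Longrightarrow> g x < c1"
    and concave: "concave_on {-c1..c1} g"
    and g_c1: "g c1 = - c1 / lam"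
    and deriv_c1: "deriv g c1 = - lam"
  using unimodal_at_0 unfolding unimodal_def c1_def by auto

lemma g_le_c1: "x \<in> {-1..1} \<Longrightarrow> g x \<le> c1"
  using g_less_c1[of x] by (cases "x = 0") (simp_all add: c1_def)

lemma c1_pos: "c1 > 0"
proof (rule ccontr)
  assume "\<not> c1 > 0"
  have "c1 \<in> {-1..1}" using maps_into unfolding c1_def by simp
  then have "- c1 / lam \<le> c1" using g_le_c1[of c1] g_c1 by simp
  then have "0 \<le> (lam + 1) * c1" using lam_gt_1 by (simp add: field_simps)
  then have "c1 = 0" using \<open>\<not> c1 > 0\<close> lam_gt_1 by (simp add: zero_le_mult_iff)
  then show False using deriv_c1 deriv_0 lam_gt_1 by simp
qed

lemma c1_lt_1: "c1 < 1"
proof -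
  have "c1 \<le> 1" using maps_into unfolding c1_def by auto
  moreover have "c1 \<noteq> 1" using g_c1 g_1 lam_gt_1 by (auto simp: field_simps)
  ultimately show ?thesis by simp
qed

lemma deriv_odd:
  assumes y: "y \<in> {-1..1}"
  shows "deriv g (- y) = - deriv g y"
proof -
  have "((\<lambda>t. - t) has_real_derivative -1) (at y)"
    by (intro derivative_eq_intros) auto
  moreover have "(g has_real_derivative deriv g (- y)) (at (- y))" using has_deriv y by simp
  ultimately have "((\<lambda>t. g (- t)) has_real_derivative deriv g (- y) * -1) (at y)"
    using DERIV_chain2 by blast
  then have "deriv g (- y) * -1 = deriv g y"
    by (rule has_real_derivative_unique_on_Icc[OF _ has_deriv[OF y], where a="-1" and b=1])
      (use y even in auto)
  then show ?thesis by simp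
qed

lemma deriv_scaled:
  assumes hu: "\<bar>lam * u\<bar> \<le> 1"
  shows "deriv g (lam * u) = - deriv g (g u) * deriv g u"
proof -
  have "\<bar>u\<bar> \<le> \<bar>lam * u\<bar>" using lam_gt_1 mult_right_mono[of 1 lam "\<bar>u\<bar>"] by (simp add: abs_mult)
  then have u: "u \<in> {-1..1}" using hu by (auto simp: abs_le_iff)
  have "((\<lambda>t. g (g t)) has_real_derivative deriv g (g u) * deriv g u) (at u)"
    using DERIV_chain2[OF has_deriv has_deriv] maps_into u by blast
  then have lhs: "((\<lambda>t. - lam * g (g t)) has_real_derivative - lam * (deriv g (g u) * deriv g u)) (at u)"
    by (rule DERIV_cmult)
  have "lam * u \<in> {-1..1}" using hu by (auto simp: abs_le_iff)
  then have rhs: "((\<lambda>t. g (lam * t)) has_real_derivative deriv g (lam * u) * lam) (at u)"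
    using DERIV_chain2[OF has_deriv DERIV_cmult_Id] by blast
  have "- lam * (deriv g (g u) * deriv g u) = deriv g (lam * u) * lam"
  proof (rule has_real_derivative_unique_on_Icc[OF lhs rhs, of "- (1/lam)" "1/lam"])
    show "- (1 / lam) < 1 / lam" using lam_gt_1 by simp
    show "u \<in> {- (1 / lam)..1 / lam}" using hu lam_gt_1 by (auto simp: abs_le_iff field_simps)
    fix t assume "t \<in> {- (1 / lam)..1 / lam}"
    then have "\<bar>lam * t\<bar> \<le> 1" using lam_gt_1 by (auto simp: abs_le_iff field_simps)
    then show "- lam * g (g t) = g (lam * t)" using g_scaled by simp
  qed
  then have "lam * deriv g (lam * u) = lam * (- deriv g (g u) * deriv g u)" by (simp add: algebra_simps)
  moreover have "lam \<noteq> 0" using lam_gt_1 by simp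
  ultimately show ?thesis by (metis mult_left_cancel)
qed

lemma secant_le_deriv:
  assumes "- c1 \<le> x" "x < y" "y \<le> c1"
  shows "(g y - g x) / (y - x) \<le> deriv g x" "deriv g y \<le> (g y - g x) / (y - x)"
proof -
  have "x \<in> {-1..1}" "y \<in> {-1..1}" using assms c1_lt_1 by auto
  then show "(g y - g x) / (y - x) \<le> deriv g x" "deriv g y \<le> (g y - g x) / (y - x)"
    using concave_on_secant_between_derivatives[OF concave assms has_deriv has_deriv] by auto
qed

lemma deriv_antimono: "- c1 \<le> x \<Longrightarrow> x \<le> y \<Longrightarrow> y \<le> c1 \<Longrightarrow> deriv g y \<le> deriv g x"
  using secant_le_deriv by (metis order.order_iff_strict order.trans)

lemma deriv_range: "0 \<le> y \<Longrightarrow> y \<le> c1 \<Longrightarrow> - lam \<le> deriv g y \<and> deriv g y \<le> 0"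
  using deriv_antimono[of 0 y] deriv_antimono[of y c1] deriv_0 deriv_c1 c1_pos by fastforce

lemma g_antimono:
  assumes "0 \<le> x" "x \<le> y" "y \<le> c1"
  shows "g y \<le> g x"
proof (cases "x = y")
  case False
  then have "(g y - g x) / (y - x) \<le> 0"
    using secant_le_deriv(1)[of x y] deriv_range[of x] assms c1_pos by fastforce
  then show ?thesis using False assms by (simp add: divide_le_0_iff)
qed simp

lemma abs_deriv_le:
  assumes "\<bar>t\<bar> \<le> s" "s \<le> c1"
  shows "\<bar>deriv g t\<bar> \<le> - deriv g s"
proof (cases "0 \<le> t")
  case True
  then show ?thesis using deriv_antimono[of t s] deriv_range[of t] assms by auto
next
  case False
  then have "deriv g (- t) = - deriv g t" using deriv_odd[of t] assms c1_lt_1 by auto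
  then show ?thesis using deriv_antimono[of "- t" s] deriv_range[of "- t"] assms False by auto
qed

definition u0 :: real where "u0 = c1 / lam"

lemma u0_pos: "u0 > 0"
  using c1_pos lam_gt_1 by (simp add: u0_def)

lemma c1_eq: "c1 = lam * u0"
  using lam_gt_1 by (simp add: u0_def)

lemma u0_lt_c1: "u0 < c1"
  using c1_eq u0_pos lam_gt_1 by simp

lemma u0_le_inv_lam: "u0 \<le> 1 / lam"
  using c1_lt_1 lam_gt_1 by (simp add: u0_def divide_right_mono)

lemma g_c1_eq: "g c1 = - u0"
  using g_c1 by (simp add: u0_def)

lemma g_g_u0: "g (g u0) = u0 / lam"
proof -
  have "- u0 = - lam * g (g u0)"
    using g_scaled[of u0] c1_eq c1_pos c1_lt_1 g_c1_eq by simp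
  then show ?thesis using lam_gt_1 by (simp add: field_simps)
qed

lemma deriv_g_u0_mult_deriv_u0: "deriv g (g u0) * deriv g u0 = lam"
  using deriv_scaled[of u0] c1_eq c1_pos c1_lt_1 deriv_c1 by simp

lemma g_u0_le_c1: "g u0 \<le> c1"
  using g_le_c1 u0_pos u0_lt_c1 c1_lt_1 by simp

text \<open>If \<open>g u0 < u0\<close>, the secant of \<open>g\<close> over \<open>[u0, c1]\<close> bounds
  \<open>- deriv g u0\<close> by \<open>2 / (lam - 1)\<close>, whereas the differentiated functional equation
  at \<open>u0\<close> forces \<open>(deriv g u0)\<^sup>2 \<ge> lam\<close>; the two clash for \<open>lam \<ge> 2.5\<close>.\<close>
lemma u0_le_g_u0: "u0 \<le> g u0"
proof (rule ccontr)
  assume "\<not> u0 \<le> g u0"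
  then have below: "g u0 < u0" by simp
  define A where "A = - deriv g u0"
  have A_nonneg: "0 \<le> A" using deriv_range[of u0] u0_pos u0_lt_c1 by (simp add: A_def)
  have "- u0 \<le> g u0" using g_antimono[of u0 c1] u0_pos u0_lt_c1 g_c1_eq by simp
  then have "\<bar>deriv g (g u0)\<bar> \<le> A"
    using abs_deriv_le[of "g u0" u0] below u0_lt_c1 by (simp add: A_def)
  moreover have "\<bar>deriv g u0\<bar> = A" using A_nonneg by (simp add: A_def)
  ultimately have "\<bar>deriv g (g u0)\<bar> * \<bar>deriv g u0\<bar> \<le> A * A"
    using A_nonneg by (simp add: mult_right_mono)
  moreover have "\<bar>deriv g (g u0)\<bar> * \<bar>deriv g u0\<bar> = lam"
    using deriv_g_u0_mult_deriv_u0 lam_gt_1 by (simp add: abs_mult[symmetric])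
  ultimately have "lam \<le> A\<^sup>2" by (simp add: power2_eq_square)
  then have "lam * (lam - 1)\<^sup>2 \<le> (A * (lam - 1))\<^sup>2"
    by (simp add: power_mult_distrib mult_right_mono)
  also have "\<dots> < 2\<^sup>2"
  proof (rule power_strict_mono)
    have "(g c1 - g u0) / (c1 - u0) \<le> - A"
      using secant_le_deriv(1)[of u0 c1] u0_pos u0_lt_c1 by (simp add: A_def)
    then have "A * ((lam - 1) * u0) \<le> u0 + g u0"
      using u0_lt_c1 lam_gt_1 g_c1_eq c1_eq by (simp add: field_simps)
    then have "(A * (lam - 1)) * u0 < 2 * u0" using below by (simp add: algebra_simps)
    then show "A * (lam - 1) < 2" using u0_pos by simp
  qed (use A_nonneg lam_gt_1 in auto)
  also have "(2::real)\<^sup>2 \<le> 2.5 * 1.5\<^sup>2" by (simp add: power2_eq_square)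
  also have "\<dots> \<le> lam * (lam - 1)\<^sup>2"
    using lam_ge by (intro mult_mono power_mono) auto
  finally show False by simp
qed

text \<open>Otherwise \<open>deriv g = - lam\<close> on \<open>[g u0, c1]\<close>, where the Schwarzian derivative would
  then vanish.\<close>
lemma deriv_u0_lt_minus_1: "deriv g u0 < -1"
proof (rule ccontr)
  assume "\<not> deriv g u0 < -1"
  have "- lam \<le> deriv g (g u0)" "deriv g (g u0) \<le> 0"
    using deriv_range[of "g u0"] u0_le_g_u0 g_u0_le_c1 u0_pos by auto
  then have "- deriv g (g u0) * (- deriv g u0) \<le> - deriv g (g u0)"
    using \<open>\<not> deriv g u0 < -1\<close> deriv_range[of u0] u0_pos u0_lt_c1 by (intro mult_left_le) auto
  then have deriv_g_u0: "deriv g (g u0) = - lam"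
    using deriv_g_u0_mult_deriv_u0 \<open>- lam \<le> deriv g (g u0)\<close> by simp
  have const: "deriv g t = - lam" if "t \<in> {g u0<..<c1}" for t
    using deriv_antimono[of t c1] deriv_antimono[of "g u0" t] that deriv_c1 deriv_g_u0
      u0_le_g_u0 u0_pos by force
  have "g u0 < c1" using g_less_c1 u0_pos u0_lt_c1 c1_lt_1 by simp
  then have m: "(g u0 + c1) / 2 \<in> {g u0<..<c1}" by auto
  then have "schwarzian g ((g u0 + c1) / 2) = 0"
    by (rule schwarzian_eq_0_if_deriv_locally_const[OF open_greaterThanLessThan _ const])
  moreover have "(g u0 + c1) / 2 \<in> {-1..1}" using m u0_le_g_u0 u0_pos c1_lt_1 by auto
  ultimately show False using schwarzian_neg const[OF m] lam_gt_1 by fastforce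
qed

lemma g_g_inv_lam: "g (g (1 / lam)) = 1 / lam"
proof -
  have "-1 = - lam * g (g (1 / lam))"
    using g_scaled[of "1 / lam"] g_1 lam_gt_1 by simp
  then show ?thesis using lam_gt_1 by (simp add: field_simps)
qed

lemma inv_lam_in: "1 / lam \<in> {-1..1}"
proof -
  have "0 < 1 / lam" "1 / lam \<le> 1" using lam_gt_1 by simp_all
  then show ?thesis unfolding atLeastAtMost_iff by linarith
qed

lemma inv_lam_le_c1: "1 / lam \<le> c1"
  using g_le_c1[of "g (1 / lam)"] maps_into[OF inv_lam_in] g_g_inv_lam by simp

lemma g_inv_lam_pos: "g (1 / lam) > 0"
proof -
  have "deriv g (-1) = - deriv g (g (- (1 / lam))) * deriv g (- (1 / lam))"
    using deriv_scaled[of "- (1 / lam)"] lam_gt_1 by simp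
  also have "\<dots> = deriv g (g (1 / lam)) * deriv g (1 / lam)"
    using even[OF inv_lam_in] deriv_odd[OF inv_lam_in] by simp
  finally have "deriv g (g (1 / lam)) * deriv g (1 / lam) > 0"
    using deriv_minus_1_pos by simp
  moreover have "deriv g (1 / lam) \<le> 0"
    using deriv_range inv_lam_le_c1 lam_gt_1 by simp
  ultimately have neg: "deriv g (g (1 / lam)) < 0"
    by (auto simp: zero_less_mult_iff)
  have "- c1 \<le> g (1 / lam)"
    using g_antimono[of "1 / lam" c1] inv_lam_le_c1 g_c1_eq u0_lt_c1 lam_gt_1 by simp
  then show ?thesis
    using deriv_antimono[of "g (1 / lam)" 0] deriv_0 neg c1_pos by fastforce
qed

text \<open>If \<open>g (1 / lam) < u0\<close>, the ordering of the points \<open>g (1 / lam)\<close>, \<open>u0 / lam\<close>, \<open>u0\<close>,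
  \<open>g u0\<close>, \<open>1 / lam\<close> on the decreasing branch of \<open>g\<close> forces \<open>g (g (u0 / lam))\<close> to be at
  least \<open>g (1 / lam) > 0\<close>, while the functional equation at \<open>u0 / lam\<close> makes it negative.\<close>
lemma u0_le_g_inv_lam: "u0 \<le> g (1 / lam)"
proof (rule ccontr)
  define q w where "q = g (1 / lam)" and "w = u0 / lam"
  assume "\<not> u0 \<le> g (1 / lam)"
  then have "q < u0" by (simp add: q_def)
  have q_pos: "0 < q" using g_inv_lam_pos by (simp add: q_def)
  have w: "0 < w" "w \<le> u0" using u0_pos lam_gt_1 by (auto simp: w_def field_simps)
  have "g u0 \<le> 1 / lam"
    using g_antimono[of q u0] q_pos \<open>q < u0\<close> u0_lt_c1 g_g_inv_lam by (simp add: q_def)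
  then have "q \<le> w"
    using g_antimono[of "g u0" "1 / lam"] u0_le_g_u0 u0_pos inv_lam_le_c1 g_g_u0
    by (simp add: q_def w_def)
  then have "g w \<le> 1 / lam" "g u0 \<le> g w"
    using g_antimono[of q w] g_antimono[of w u0] q_pos w u0_lt_c1 g_g_inv_lam
    by (auto simp: q_def)
  then have "q \<le> g (g w)"
    using g_antimono[of "g w" "1 / lam"] u0_le_g_u0 u0_pos inv_lam_le_c1 by (simp add: q_def)
  moreover have "g u0 = - lam * g (g w)"
    using g_scaled[of w] w u0_lt_c1 c1_lt_1 lam_gt_1 by (simp add: w_def)
  then have "lam * g (g w) < 0" using u0_le_g_u0 u0_pos by simp
  then have "g (g w) < 0" using lam_gt_1 by (simp add: mult_less_0_iff)
  ultimately show False using q_pos by simp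
qed

lemma deriv_bounds_between_u0_c1:
  "u0 \<le> t \<Longrightarrow> t \<le> c1 \<Longrightarrow> - deriv g u0 \<le> - deriv g t \<and> - deriv g t \<le> lam"
  using deriv_antimono[of u0 t] deriv_antimono[of t c1] deriv_c1 u0_pos by auto

lemma deriv_bounds_nonneg:
  assumes y: "1 / lam \<le> y" "y \<le> 1"
  shows "- deriv g u0 \<le> \<bar>deriv g y\<bar> \<and> \<bar>deriv g y\<bar> \<le> lam\<^sup>2"
proof -
  have y_pos: "0 < y" using y lam_gt_1 by (simp add: less_le_trans[of 0 "1 / lam"])
  have "1 < - deriv g u0" using deriv_u0_lt_minus_1 by simp
  show ?thesis
  proof (cases "y \<le> c1")
    case True
    moreover have "lam \<le> lam\<^sup>2" using lam_gt_1 by (simp add: power2_eq_square)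
    ultimately show ?thesis
      using deriv_bounds_between_u0_c1[of y] deriv_range[of y] y y_pos u0_le_inv_lam by auto
  next
    case False
    define u where "u = y / lam"
    have u: "u0 \<le> u" "u \<le> 1 / lam"
      using False y lam_gt_1 by (auto simp: u_def u0_def divide_right_mono)
    have y_eq: "y = lam * u" using lam_gt_1 by (simp add: u_def)
    then have "\<bar>lam * u\<bar> \<le> 1" using y y_pos by simp
    then have "deriv g y = - deriv g (g u) * deriv g u"
      unfolding y_eq by (rule deriv_scaled)
    moreover have "u0 \<le> g u" "g u \<le> c1"
      using g_antimono[of u "1 / lam"] g_antimono[of u0 u] u u0_pos inv_lam_le_c1
        u0_le_g_inv_lam g_u0_le_c1 by auto
    then have a: "- deriv g u0 \<le> - deriv g (g u)" "- deriv g (g u) \<le> lam"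
      using deriv_bounds_between_u0_c1 by auto
    have b: "- deriv g u0 \<le> - deriv g u" "- deriv g u \<le> lam"
      using deriv_bounds_between_u0_c1 u inv_lam_le_c1 by auto
    have "\<bar>deriv g y\<bar> = (- deriv g (g u)) * (- deriv g u)"
      using \<open>deriv g y = - deriv g (g u) * deriv g u\<close> a b \<open>1 < - deriv g u0\<close>
      by (simp add: abs_mult)
    moreover have "- deriv g u0 \<le> (- deriv g u0) * (- deriv g u0)"
      using mult_right_mono[of 1 "- deriv g u0" "- deriv g u0"] \<open>1 < - deriv g u0\<close> by simp
    moreover have "(- deriv g u0) * (- deriv g u0) \<le> (- deriv g (g u)) * (- deriv g u)"
      using a b \<open>1 < - deriv g u0\<close> by (intro mult_mono) auto
    moreover have "(- deriv g (g u)) * (- deriv g u) \<le> lam * lam"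
      using a b \<open>1 < - deriv g u0\<close> by (intro mult_mono) auto
    ultimately show ?thesis by (simp add: power2_eq_square)
  qed
qed

lemma deriv_bounds:
  assumes "1 / lam \<le> \<bar>y\<bar>" "\<bar>y\<bar> \<le> 1"
  shows "- deriv g u0 \<le> \<bar>deriv g y\<bar> \<and> \<bar>deriv g y\<bar> \<le> lam\<^sup>2"
proof (cases "0 \<le> y")
  case True
  then show ?thesis using deriv_bounds_nonneg assms by simp
next
  case False
  then show ?thesis using deriv_bounds_nonneg[of "- y"] deriv_odd[of y] assms by auto
qed

lemma abs_scaled_le_Suc: "\<bar>lam ^ j * x\<bar> \<le> \<bar>lam ^ Suc j * x\<bar>"
  using lam_gt_1 by (simp add: abs_mult mult_right_mono)

lemma iterate_comp_g:
  "\<bar>lam ^ j * x\<bar> \<le> 1 \<Longrightarrow> ((\<lambda>y. (- lam) * g y) ^^ j) (g x) = g (lam ^ j * x)"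
proof (induction j)
  case (Suc j)
  then have "((\<lambda>y. (- lam) * g y) ^^ j) (g x) = g (lam ^ j * x)"
    using abs_scaled_le_Suc[of j x] by simp
  then show ?case using g_scaled[of "lam ^ j * x"] Suc.prems by (simp add: mult.assoc)
qed simp

lemma has_real_derivative_iterate:
  "\<bar>lam ^ j * x\<bar> \<le> 1 \<Longrightarrow>
    (((\<lambda>y. (- lam) * g y) ^^ j) \<circ> g has_real_derivative lam ^ j * deriv g (lam ^ j * x)) (at x)"
proof (induction j)
  case 0
  then show ?case using has_deriv by (simp add: abs_le_iff)
next
  case (Suc j)
  define T where "T = (\<lambda>y. (- lam) * g y)"
  define u where "u = lam ^ j * x"
  have u: "\<bar>lam * u\<bar> \<le> 1" "\<bar>u\<bar> \<le> 1"
    using Suc.prems abs_scaled_le_Suc[of j x] by (simp_all add: u_def mult.assoc)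
  have F: "((T ^^ j) \<circ> g has_real_derivative lam ^ j * deriv g u) (at x)"
    unfolding T_def u_def using Suc.IH u(2)[unfolded u_def] .
  have point: "((T ^^ j) \<circ> g) x = g u"
    using iterate_comp_g u by (simp add: T_def u_def)
  have "g u \<in> {-1..1}" using maps_into u(2) by (simp add: abs_le_iff)
  then have "(T has_real_derivative - lam * deriv g (g u)) (at (((T ^^ j) \<circ> g) x))"
    unfolding point unfolding T_def by (intro DERIV_cmult has_deriv)
  from DERIV_chain2[OF this F]
  have "((T ^^ Suc j) \<circ> g has_real_derivative
      - lam * deriv g (g u) * (lam ^ j * deriv g u)) (at x)"
    by (simp add: comp_def)
  moreover have "- lam * deriv g (g u) * (lam ^ j * deriv g u) = lam ^ Suc j * deriv g (lam ^ Suc j * x)"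
    using deriv_scaled[OF u(1)] by (simp add: u_def mult.assoc)
  ultimately show ?case by (simp only: T_def)
qed

lemma deriv_iterate_bounds:
  assumes "1 / lam ^ Suc j \<le> \<bar>x\<bar>" "\<bar>x\<bar> \<le> 1 / lam ^ j"
  shows "- deriv g u0 * lam ^ j \<le> \<bar>deriv (((\<lambda>y. (- lam) * g y) ^^ j) \<circ> g) x\<bar> \<and>
    \<bar>deriv (((\<lambda>y. (- lam) * g y) ^^ j) \<circ> g) x\<bar> \<le> lam\<^sup>2 * lam ^ j"
proof -
  have lam_pow: "lam ^ j > 0" using lam_gt_1 by simp
  have scaled: "1 / lam \<le> \<bar>lam ^ j * x\<bar>" "\<bar>lam ^ j * x\<bar> \<le> 1"
    using assms lam_pow lam_gt_1 by (simp_all add: abs_mult field_simps)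
  then have "deriv (((\<lambda>y. (- lam) * g y) ^^ j) \<circ> g) x = lam ^ j * deriv g (lam ^ j * x)"
    using has_real_derivative_iterate DERIV_imp_deriv by blast
  then have "\<bar>deriv (((\<lambda>y. (- lam) * g y) ^^ j) \<circ> g) x\<bar> = \<bar>deriv g (lam ^ j * x)\<bar> * lam ^ j"
    using lam_pow by (simp add: abs_mult)
  moreover have "- deriv g u0 * lam ^ j \<le> \<bar>deriv g (lam ^ j * x)\<bar> * lam ^ j"
    using deriv_bounds[OF scaled] lam_pow by (intro mult_right_mono) auto
  moreover have "\<bar>deriv g (lam ^ j * x)\<bar> * lam ^ j \<le> lam\<^sup>2 * lam ^ j"
    using deriv_bounds[OF scaled] lam_pow by (intro mult_right_mono) auto
  ultimately show ?thesis by simp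
qed

end

theorem mainTheorem9:
  fixes lam :: real and g :: "real \<Rightarrow> real"
  assumes "feigenbaum_fixed_point lam g"
  shows "\<exists>E E'. E > 1 \<and> E' > 1 \<and>
           (\<forall>j::nat. \<forall>x::real. lam powi (- int j - 1) \<le> \<bar>x\<bar> \<and> \<bar>x\<bar> \<le> lam powi (- int j) \<longrightarrow>
              E * lam ^ j \<le> \<bar>deriv (((\<lambda>y. (- lam) * g y) ^^ j) \<circ> g) x\<bar> \<and>
              \<bar>deriv (((\<lambda>y. (- lam) * g y) ^^ j) \<circ> g) x\<bar> \<le> E' * lam ^ j)"
proof -
  interpret feigenbaum_map lam g using assms by (rule feigenbaum_map.intro)
  show ?thesis
  proof (intro exI conjI allI impI)
    show "- deriv g u0 > 1" using deriv_u0_lt_minus_1 by simp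
    show "lam\<^sup>2 > 1" using lam_gt_1 by (simp add: one_less_power)
    fix j :: nat and x :: real
    assume "lam powi (- int j - 1) \<le> \<bar>x\<bar> \<and> \<bar>x\<bar> \<le> lam powi (- int j)"
    then have "1 / lam ^ Suc j \<le> \<bar>x\<bar>" "\<bar>x\<bar> \<le> 1 / lam ^ j"
      using lam_gt_1 by (simp_all add: power_int_diff power_int_minus field_simps)
    then show "- deriv g u0 * lam ^ j \<le> \<bar>deriv (((\<lambda>y. (- lam) * g y) ^^ j) \<circ> g) x\<bar>"
      and "\<bar>deriv (((\<lambda>y. (- lam) * g y) ^^ j) \<circ> g) x\<bar> \<le> lam\<^sup>2 * lam ^ j"
      using deriv_iterate_bounds by auto
  qed
qed

end
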